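(* Let $\mathbb{K}$ be a topological field, $d\in\mathbb{N}$, $F$ a topological $\mathbb{K}$-vector space, $U\subseteq\mathbb{K}^d$ open or of the form $U_1\times\cdots\times U_d$ with $U_i\subseteq\mathbb{K}$ having dense interior, and $f\colon U\to F$. If $f$ is $C^k_{BGN}$ for some $k\in\mathbb{N}_0$, then $f$ is $C^k_{SDS}$. If $\mathbb{K}$ is a valued field, $\sigma>0$ and $f$ is $C^{k,\sigma}_{BGN}$, then $f$ is $C^{k,\sigma}_{SDS}$.
   Context: Topological fields are Hausdorff and non-discrete; vector spaces Hausdorff; a valued field carries an absolute value defining a non-discrete topology. BGN: for $V\subseteq E$ with dense interior, $V^{[1]}=\{(x,y,t)\in V\times E\times\mathbb{K}: x+ty\in V\}$, $V^{]1[}$ its subset with $t\neq0$, $g^{]1[}(x,y,t)=(g(x+ty)-g(x))/t$. $g$ is $C^0_{BGN}$ if continuous, $C^1_{BGN}$ if moreover $g^{]1[}$ extends continuously to $g^{[1]}$ on $V^{[1]}$, $C^k_{BGN}$ if $C^1_{BGN}$ with $g^{[1]}$ $C^{k-1}_{BGN}$; $g^{[k]}=(g^{[1]})^{[k-1]}$, $g^{[0]}=g$. SDS: for $\alpha\in\mathbb{N}_0^d$, write $x\in\mathbb{K}^{d+|\alpha|}$ as $(x^{(1)},\ldots,x^{(d)})$ with $x^{(i)}=(x^{(i)}_0,\ldots,x^{(i)}_{\alpha_i})$; $U^{<\alpha>}$: all $x$ with $(x^{(1)}_{i_1},\ldots,x^{(d)}_{i_d})\in U$ for all $0\le i_\ell\le\alpha_\ell$;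 $U^{>\alpha<}$: those with pairwise distinct entries within each $x^{(i)}$; $f^{>0<}=f$, $f^{>\alpha<}(x)=\sum_{j_1,\ldots,j_d}\big(\prod_{\ell}\prod_{k_\ell\neq j_\ell}(x^{(\ell)}_{j_\ell}-x^{(\ell)}_{k_\ell})^{-1}\big)f(x^{(1)}_{j_1},\ldots,x^{(d)}_{j_d})$ ($0\le j_\ell,k_\ell\le\alpha_\ell$). $f$ is $C^k_{SDS}$ if continuous and, for every $1\le|\alpha|\le k$, $f^{>\alpha<}$ has a continuous extension $f^{<\alpha>}$ to $U^{<\alpha>}$ ($f^{<0>}=f$). Hölder: a gauge on $E$ is $q\colon E\to[0,\infty[$ with $q(tx)=|t|q(x)$ and $\{q<r\}$ a $0$-neighbourhood for all $r>0$; $g\colon V\to F$ is $C^{0,\sigma}$ if for each $x_0\in V$ and gauge $q$ on $F$ there exist a gauge $p$ on $E$ and a neighbourhood $W$ of $x_0$ in $V$ with $q(g(y)-g(x))\le p(y-x)^\sigma$ on $W$. $C^{k,\sigma}_{BGN}$: $C^k_{BGN}$ with all $f^{[j]}$ ($j\le k$) $C^{0,\sigma}$; $C^{k,\sigma}_{SDS}$: $C^k_{SDS}$ with all $f^{<\alpha>}$ ($|\alpha|\le k$) $C^{0,\sigma}$. *)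

theory Defs
  imports "HOL-Analysis.Analysis"
begin

(* Conventions: K^m is represented as Km m = functions nat => 'k vanishing from index m on,
   with the (subspace of the) product topology on nat => 'k. *)

definition Km :: "nat \<Rightarrow> (nat \<Rightarrow> 'k::zero) set" where
  "Km m = {x. \<forall>i\<ge>m. x i = 0}"

definition top_field :: "'k::{field,t2_space,perfect_space} itself \<Rightarrow> bool" where
  "top_field _ \<longleftrightarrow>
     continuous_on UNIV (\<lambda>p::'k\<times>'k. fst p + snd p) \<and>
     continuous_on UNIV (\<lambda>p::'k\<times>'k. fst p * snd p) \<and>
     continuous_on UNIV (\<lambda>x::'k. - x) \<and>
     continuous_on (- {0}) (\<lambda>x::'k. inverse x)"

definition tvs :: "('k::{field,topological_space} \<Rightarrow> 'f::{ab_group_add,t2_space} \<Rightarrow> 'f) \<Rightarrow> bool" where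
  "tvs smul \<longleftrightarrow> vector_space smul \<and>
     continuous_on UNIV (\<lambda>p::'f\<times>'f. fst p + snd p) \<and>
     continuous_on UNIV (\<lambda>p::'k\<times>'f. smul (fst p) (snd p))"

definition valued_field :: "('k::{field,topological_space} \<Rightarrow> real) \<Rightarrow> bool" where
  "valued_field av \<longleftrightarrow>
     (\<forall>x. 0 \<le> av x) \<and> (\<forall>x. av x = 0 \<longleftrightarrow> x = 0) \<and>
     (\<forall>x y. av (x * y) = av x * av y) \<and> (\<forall>x y. av (x + y) \<le> av x + av y) \<and>
     (\<forall>S. open S \<longleftrightarrow> (\<forall>x\<in>S. \<exists>e>0. \<forall>y. av (y - x) < e \<longrightarrow> y \<in> S))"

definition gaugeE :: "('k::{field,topological_space} \<Rightarrow> real) \<Rightarrow> nat \<Rightarrow> ((nat \<Rightarrow> 'k) \<Rightarrow> real) \<Rightarrow> bool" where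
  "gaugeE av m p \<longleftrightarrow>
     (\<forall>x\<in>Km m. 0 \<le> p x \<and> (\<forall>t. p (\<lambda>i. t * x i) = av t * p x)) \<and>
     (\<forall>r>0. \<exists>N. open N \<and> (\<lambda>_. 0) \<in> N \<and> N \<inter> Km m \<subseteq> {x. p x < r})"

definition gaugeF :: "('k \<Rightarrow> real) \<Rightarrow> ('k \<Rightarrow> 'f::{ab_group_add,topological_space} \<Rightarrow> 'f) \<Rightarrow> ('f \<Rightarrow> real) \<Rightarrow> bool" where
  "gaugeF av smul q \<longleftrightarrow>
     (\<forall>v. 0 \<le> q v \<and> (\<forall>t. q (smul t v) = av t * q v)) \<and>
     (\<forall>r>0. \<exists>N. open N \<and> 0 \<in> N \<and> N \<subseteq> {v. q v < r})"

definition holder :: "('k::{field,topological_space} \<Rightarrow> real) \<Rightarrow> ('k \<Rightarrow> 'f::{ab_group_add,topological_space} \<Rightarrow> 'f)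
     \<Rightarrow> real \<Rightarrow> nat \<Rightarrow> (nat \<Rightarrow> 'k) set \<Rightarrow> ((nat \<Rightarrow> 'k) \<Rightarrow> 'f) \<Rightarrow> bool" where
  "holder av smul \<sigma> m V g \<longleftrightarrow>
     (\<forall>x0\<in>V. \<forall>q. gaugeF av smul q \<longrightarrow>
        (\<exists>p W. gaugeE av m p \<and> open W \<and> x0 \<in> W \<and>
           (\<forall>x\<in>V \<inter> W. \<forall>y\<in>V \<inter> W. q (g y - g x) \<le> p (\<lambda>i. y i - x i) powr \<sigma>)))"

(* V^[1] subset of K^m x K^m x K, flattened to K^(2m+1): x = coords 0..m-1, y = m..2m-1, t = 2m *)

definition xpart :: "nat \<Rightarrow> (nat \<Rightarrow> 'k::zero) \<Rightarrow> nat \<Rightarrow> 'k" where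
  "xpart m z = (\<lambda>i. if i < m then z i else 0)"

definition ypart :: "nat \<Rightarrow> (nat \<Rightarrow> 'k::zero) \<Rightarrow> nat \<Rightarrow> 'k" where
  "ypart m z = (\<lambda>i. if i < m then z (m + i) else 0)"

definition shifted :: "nat \<Rightarrow> (nat \<Rightarrow> 'k::field) \<Rightarrow> nat \<Rightarrow> 'k" where
  "shifted m z = (\<lambda>i. xpart m z i + z (2 * m) * ypart m z i)"

definition V1 :: "nat \<Rightarrow> (nat \<Rightarrow> 'k::field) set \<Rightarrow> (nat \<Rightarrow> 'k) set" where
  "V1 m V = {z \<in> Km (2 * m + 1). xpart m z \<in> V \<and> shifted m z \<in> V}"

definition V1' :: "nat \<Rightarrow> (nat \<Rightarrow> 'k::field) set \<Rightarrow> (nat \<Rightarrow> 'k) set" where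
  "V1' m V = {z \<in> V1 m V. z (2 * m) \<noteq> 0}"

definition dquot :: "('k::field \<Rightarrow> 'f::ab_group_add \<Rightarrow> 'f) \<Rightarrow> nat \<Rightarrow> ((nat \<Rightarrow> 'k) \<Rightarrow> 'f) \<Rightarrow> (nat \<Rightarrow> 'k) \<Rightarrow> 'f" where
  "dquot smul m g z = smul (inverse (z (2 * m))) (g (shifted m z) - g (xpart m z))"

fun BGN :: "('k::{field,topological_space} \<Rightarrow> 'f::{ab_group_add,topological_space} \<Rightarrow> 'f)
     \<Rightarrow> nat \<Rightarrow> nat \<Rightarrow> (nat \<Rightarrow> 'k) set \<Rightarrow> ((nat \<Rightarrow> 'k) \<Rightarrow> 'f) \<Rightarrow> bool" where
  "BGN smul 0 m V g \<longleftrightarrow> continuous_on V g"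
| "BGN smul (Suc k) m V g \<longleftrightarrow> continuous_on V g \<and>
     (\<exists>G. (\<forall>z\<in>V1' m V. G z = dquot smul m g z) \<and> BGN smul k (2 * m + 1) (V1 m V) G)"

fun BGNH :: "('k::{field,topological_space} \<Rightarrow> real) \<Rightarrow> ('k \<Rightarrow> 'f::{ab_group_add,topological_space} \<Rightarrow> 'f)
     \<Rightarrow> real \<Rightarrow> nat \<Rightarrow> nat \<Rightarrow> (nat \<Rightarrow> 'k) set \<Rightarrow> ((nat \<Rightarrow> 'k) \<Rightarrow> 'f) \<Rightarrow> bool" where
  "BGNH av smul \<sigma> 0 m V g \<longleftrightarrow> continuous_on V g \<and> holder av smul \<sigma> m V g"
| "BGNH av smul \<sigma> (Suc k) m V g \<longleftrightarrow> continuous_on V g \<and> holder av smul \<sigma> m V g \<and>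
     (\<exists>G. (\<forall>z\<in>V1' m V. G z = dquot smul m g z) \<and> BGNH av smul \<sigma> k (2 * m + 1) (V1 m V) G)"

(* alpha : nat => nat, only alpha 0..alpha (d-1) matter; |alpha| = sum.
   A point of K^(d+|alpha|) is flattened: x^(l)_j sits at index pos alpha l j. *)

definition absa :: "nat \<Rightarrow> (nat \<Rightarrow> nat) \<Rightarrow> nat" where
  "absa d \<alpha> = (\<Sum>l<d. \<alpha> l)"

definition pos :: "(nat \<Rightarrow> nat) \<Rightarrow> nat \<Rightarrow> nat \<Rightarrow> nat" where
  "pos \<alpha> l j = (\<Sum>i<l. Suc (\<alpha> i)) + j"

definition sel :: "nat \<Rightarrow> (nat \<Rightarrow> nat) \<Rightarrow> (nat \<Rightarrow> 'k::zero) \<Rightarrow> (nat \<Rightarrow> nat) \<Rightarrow> nat \<Rightarrow> 'k" where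
  "sel d \<alpha> x j = (\<lambda>l. if l < d then x (pos \<alpha> l (j l)) else 0)"

definition Ualpha :: "nat \<Rightarrow> (nat \<Rightarrow> nat) \<Rightarrow> (nat \<Rightarrow> 'k::zero) set \<Rightarrow> (nat \<Rightarrow> 'k) set" where
  "Ualpha d \<alpha> U = {x \<in> Km (d + absa d \<alpha>).
      \<forall>j. (\<forall>l<d. j l \<le> \<alpha> l) \<longrightarrow> sel d \<alpha> x j \<in> U}"

definition Ualpha' :: "nat \<Rightarrow> (nat \<Rightarrow> nat) \<Rightarrow> (nat \<Rightarrow> 'k::zero) set \<Rightarrow> (nat \<Rightarrow> 'k) set" where
  "Ualpha' d \<alpha> U = {x \<in> Ualpha d \<alpha> U.
      \<forall>l<d. \<forall>j k. j \<le> \<alpha> l \<longrightarrow> k \<le> \<alpha> l \<longrightarrow> j \<noteq> k \<longrightarrow> x (pos \<alpha> l j) \<noteq> x (pos \<alpha> l k)}"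

definition fdd :: "('k::field \<Rightarrow> 'f::ab_group_add \<Rightarrow> 'f) \<Rightarrow> nat \<Rightarrow> (nat \<Rightarrow> nat)
     \<Rightarrow> ((nat \<Rightarrow> 'k) \<Rightarrow> 'f) \<Rightarrow> (nat \<Rightarrow> 'k) \<Rightarrow> 'f" where
  "fdd smul d \<alpha> f x =
     (\<Sum>j \<in> Pi\<^sub>E {..<d} (\<lambda>l. {..\<alpha> l}).
        smul (\<Prod>l<d. \<Prod>k\<in>{..\<alpha> l} - {j l}. inverse (x (pos \<alpha> l (j l)) - x (pos \<alpha> l k)))
              (f (sel d \<alpha> x j)))"

definition SDS :: "('k::{field,topological_space} \<Rightarrow> 'f::{ab_group_add,topological_space} \<Rightarrow> 'f)
     \<Rightarrow> nat \<Rightarrow> nat \<Rightarrow> (nat \<Rightarrow> 'k) set \<Rightarrow> ((nat \<Rightarrow> 'k) \<Rightarrow> 'f) \<Rightarrow> bool" where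
  "SDS smul k d U f \<longleftrightarrow> continuous_on U f \<and>
     (\<forall>\<alpha>. 1 \<le> absa d \<alpha> \<and> absa d \<alpha> \<le> k \<longrightarrow>
        (\<exists>G. continuous_on (Ualpha d \<alpha> U) G \<and> (\<forall>x\<in>Ualpha' d \<alpha> U. G x = fdd smul d \<alpha> f x)))"

definition SDSH :: "('k::{field,topological_space} \<Rightarrow> real) \<Rightarrow> ('k \<Rightarrow> 'f::{ab_group_add,topological_space} \<Rightarrow> 'f)
     \<Rightarrow> real \<Rightarrow> nat \<Rightarrow> nat \<Rightarrow> (nat \<Rightarrow> 'k) set \<Rightarrow> ((nat \<Rightarrow> 'k) \<Rightarrow> 'f) \<Rightarrow> bool" where
  "SDSH av smul \<sigma> k d U f \<longleftrightarrow> continuous_on U f \<and> holder av smul \<sigma> d U f \<and>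
     (\<forall>\<alpha>. 1 \<le> absa d \<alpha> \<and> absa d \<alpha> \<le> k \<longrightarrow>
        (\<exists>G. continuous_on (Ualpha d \<alpha> U) G \<and> (\<forall>x\<in>Ualpha' d \<alpha> U. G x = fdd smul d \<alpha> f x) \<and>
             holder av smul \<sigma> (d + absa d \<alpha>) (Ualpha d \<alpha> U) G))"

definition admissible_dom :: "nat \<Rightarrow> (nat \<Rightarrow> 'k::{zero,topological_space}) set \<Rightarrow> bool" where
  "admissible_dom d U \<longleftrightarrow>
     (U \<subseteq> Km d \<and> openin (top_of_set (Km d)) U) \<or>
     (\<exists>Us::nat \<Rightarrow> 'k set. (\<forall>i<d. Us i \<subseteq> closure (interior (Us i))) \<and>
         U = {x \<in> Km d. \<forall>i<d. x i \<in> Us i})"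

end

theory Submission
  imports Defs
begin

(* Otherwise pick a
   coordinate l with alpha_l >= 1. In that coordinate the divided difference of f at the nodes
   x_0, ..., x_{alpha_l} equals the divided difference, at the nodes x_j - x_0 (j >= 1), of the
   difference quotient t |-> (f(x + t e_l) - f(x)) / t = f^[1](x, e_l, t). Hence
   f^>alpha< = (f^[1])^>beta< o Psi on U^>alpha<, where |beta| = |alpha| - 1 and
   Psi : U^<alpha> -> (U^[1])^<beta> is affine with continuous linear part. Since f^[1] is
   C^(k-1)_BGN on U^[1], the induction hypothesis extends (f^[1])^>beta< continuously, and
   composing with Psi extends f^>alpha<. Hoelder continuity of the extension is preserved by
   the affine map Psi. *)

definition block_start :: "(nat \<Rightarrow> nat) \<Rightarrow> nat \<Rightarrow> nat" where
  "block_start n i = (\<Sum>k<i. Suc (n k))"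

lemma pos_eq_block_start: "pos n i j = block_start n i + j"
  by (simp add: pos_def block_start_def)

lemma block_start_Suc: "block_start n (Suc i) = block_start n i + Suc (n i)"
  by (simp add: block_start_def)

lemma block_start_mono: "i \<le> i' \<Longrightarrow> block_start n i \<le> block_start n i'"
  unfolding block_start_def by (rule sum_mono2) auto

lemma le_block_start: "i \<le> block_start n i"
  unfolding block_start_def using sum_mono[of "{..<i}" "\<lambda>_. 1::nat" "\<lambda>k. Suc (n k)"] by simp

lemma block_start_eq_absa: "block_start n D = D + absa D n"
  by (simp add: block_start_def absa_def sum_Suc)

definition block_of :: "(nat \<Rightarrow> nat) \<Rightarrow> nat \<Rightarrow> nat" where
  "block_of n p = (LEAST i. p < block_start n (Suc i))"

lemma block_of_pos:
  assumes "j \<le> n i"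
  shows "block_of n (pos n i j) = i"
  unfolding block_of_def pos_eq_block_start
proof (rule Least_equality)
  show "block_start n i + j < block_start n (Suc i)"
    using assms by (simp add: block_start_Suc)
next
  fix i' assume "block_start n i + j < block_start n (Suc i')"
  then show "i \<le> i'"
    using block_start_mono[of "Suc i'" i n] by (cases "i \<le> i'") auto
qed

lemma less_block_start_block_of: "p < block_start n (Suc (block_of n p))"
  unfolding block_of_def by (rule LeastI[of _ p]) (use le_block_start[of "Suc p" n] in auto)

definition flatten :: "nat \<Rightarrow> (nat \<Rightarrow> nat) \<Rightarrow> (nat \<Rightarrow> nat \<Rightarrow> 'k::zero) \<Rightarrow> nat \<Rightarrow> 'k" where
  "flatten D n Y p =
     (if block_of n p < D then Y (block_of n p) (p - block_start n (block_of n p)) else 0)"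

definition unflatten :: "(nat \<Rightarrow> nat) \<Rightarrow> (nat \<Rightarrow> 'k) \<Rightarrow> nat \<Rightarrow> nat \<Rightarrow> 'k" where
  "unflatten n x i j = x (pos n i j)"

lemma flatten_pos: "i < D \<Longrightarrow> j \<le> n i \<Longrightarrow> flatten D n Y (pos n i j) = Y i j"
  by (simp add: flatten_def block_of_pos) (simp add: pos_eq_block_start)

lemma flatten_in_Km: "flatten D n Y \<in> Km (D + absa D n)"
  unfolding Km_def
proof (intro CollectI allI impI)
  fix p assume p: "D + absa D n \<le> p"
  have "block_start n (Suc (block_of n p)) \<le> block_start n D" if "block_of n p < D"
    using that by (intro block_start_mono) simp
  then have "\<not> block_of n p < D"
    using less_block_start_block_of[of p n] p by (auto simp: block_start_eq_absa)
  then show "flatten D n Y p = 0" by (simp add: flatten_def)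
qed

section \<open>Lagrange weights and one-variable divided differences\<close>

definition lagrange_weight :: "(nat \<Rightarrow> 'k::field) \<Rightarrow> nat \<Rightarrow> nat \<Rightarrow> 'k" where
  "lagrange_weight x N m = (\<Prod>k\<in>{..N} - {m}. inverse (x m - x k))"

lemma lagrange_weight_0 [simp]: "lagrange_weight x 0 0 = 1"
  by (simp add: lagrange_weight_def)

lemma partial_fractions:
  fixes x :: "nat \<Rightarrow> 'k::field"
  assumes "finite I" "I \<noteq> {}" "inj_on x I" "\<forall>i\<in>I. X \<noteq> x i"
  shows "(\<Prod>i\<in>I. inverse (X - x i)) =
         (\<Sum>i\<in>I. inverse (X - x i) * (\<Prod>k\<in>I - {i}. inverse (x i - x k)))"
  using assms
proof (induction I arbitrary: X rule: finite_ne_induct)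
  case (singleton a)
  then show ?case by simp
next
  case (insert c F)
  have injF: "inj_on x F" and neq: "\<And>i. i \<in> F \<Longrightarrow> x c \<noteq> x i"
    using insert by (auto simp: inj_on_def)
  have IHc: "(\<Prod>i\<in>F. inverse (x c - x i)) =
      (\<Sum>i\<in>F. inverse (x c - x i) * (\<Prod>k\<in>F - {i}. inverse (x i - x k)))"
    using insert.IH[of "x c"] injF neq by auto
  have IHX: "(\<Prod>i\<in>F. inverse (X - x i)) =
      (\<Sum>i\<in>F. inverse (X - x i) * (\<Prod>k\<in>F - {i}. inverse (x i - x k)))"
    using insert.IH[of X] injF insert.prems by auto
  have two_poles: "inverse (X - x c) * inverse (x c - x i) + inverse (X - x i) * inverse (x i - x c)
      = inverse (X - x c) * inverse (X - x i)" if "i \<in> F" for i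
  proof -
    have "X - x c \<noteq> 0" "X - x i \<noteq> 0" "x c - x i \<noteq> 0"
      using insert.prems neq[OF that] that by auto
    moreover have "inverse (x i - x c) = - inverse (x c - x i)"
      by (metis inverse_minus_eq minus_diff_eq)
    ultimately show ?thesis by (simp add: divide_simps) (simp add: algebra_simps)
  qed
  have rem: "\<And>i. i \<in> F \<Longrightarrow> insert c F - {i} = insert c (F - {i})"
    using insert by auto
  have "(\<Sum>i\<in>insert c F. inverse (X - x i) * (\<Prod>k\<in>insert c F - {i}. inverse (x i - x k)))
     = (\<Sum>i\<in>F. (inverse (X - x c) * inverse (x c - x i) + inverse (X - x i) * inverse (x i - x c))
                * (\<Prod>k\<in>F - {i}. inverse (x i - x k)))"
    using insert by (simp add: rem IHc sum_distrib_left sum.distrib[symmetric] algebra_simps)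
  also have "\<dots> = inverse (X - x c) * (\<Sum>i\<in>F. inverse (X - x i) * (\<Prod>k\<in>F - {i}. inverse (x i - x k)))"
    by (simp add: two_poles sum_distrib_left mult.assoc)
  also have "\<dots> = (\<Prod>i\<in>insert c F. inverse (X - x i))"
    using insert by (simp add: IHX)
  finally show ?case by simp
qed

lemma sum_lagrange_weights_eq_0:
  fixes x :: "nat \<Rightarrow> 'k::field"
  assumes inj: "inj_on x {..Suc N}"
  shows "(\<Sum>m\<le>Suc N. lagrange_weight x (Suc N) m) = 0"
proof -
  let ?F = "{1..Suc N}"
  have neq: "\<And>i. i \<in> ?F \<Longrightarrow> x 0 \<noteq> x i"
    using inj by (auto simp: inj_on_def)
  have w0: "lagrange_weight x (Suc N) 0 = (\<Prod>k\<in>?F. inverse (x 0 - x k))"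
    unfolding lagrange_weight_def by (rule prod.cong) auto
  have wi: "lagrange_weight x (Suc N) i = - (inverse (x 0 - x i) * (\<Prod>k\<in>?F - {i}. inverse (x i - x k)))"
    if "i \<in> ?F" for i
  proof -
    have "{..Suc N} - {i} = insert 0 (?F - {i})" using that by auto
    moreover have "inverse (x i - x 0) = - inverse (x 0 - x i)"
      by (metis inverse_minus_eq minus_diff_eq)
    ultimately show ?thesis by (simp add: lagrange_weight_def)
  qed
  have "{..Suc N} = insert 0 ?F" by auto
  then have "(\<Sum>m\<le>Suc N. lagrange_weight x (Suc N) m)
      = (\<Prod>k\<in>?F. inverse (x 0 - x k))
        - (\<Sum>i\<in>?F. inverse (x 0 - x i) * (\<Prod>k\<in>?F - {i}. inverse (x i - x k)))"
    by (simp add: w0 wi sum_negf)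
  also have "\<dots> = 0"
  proof -
    have "inj_on x ?F" using inj by (rule inj_on_subset) auto
    then show ?thesis using neq by (subst partial_fractions) auto
  qed
  finally show ?thesis .
qed

lemma lagrange_weight_shift:
  fixes x :: "nat \<Rightarrow> 'k::field"
  assumes "s \<le> N"
  shows "lagrange_weight (\<lambda>k. x (Suc k) - x 0) N s * inverse (x (Suc s) - x 0)
       = lagrange_weight x (Suc N) (Suc s)"
proof -
  have "lagrange_weight (\<lambda>k. x (Suc k) - x 0) N s
      = (\<Prod>k\<in>Suc ` ({..N} - {s}). inverse (x (Suc s) - x k))"
    by (simp add: lagrange_weight_def prod.reindex)
  moreover have "{..Suc N} - {Suc s} = insert 0 (Suc ` ({..N} - {s}))"
  proof (rule set_eqI)
    show "k \<in> {..Suc N} - {Suc s} \<longleftrightarrow> k \<in> insert 0 (Suc ` ({..N} - {s}))" for k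
      by (cases k) auto
  qed
  ultimately show ?thesis
    by (simp add: lagrange_weight_def mult.commute)
qed

text \<open>The recursion of divided differences in a single variable:
  \<open>h[x\<^sub>0, \<dots>, x\<^sub>N\<^sub>+\<^sub>1] = g[x\<^sub>1 - x\<^sub>0, \<dots>, x\<^sub>N\<^sub>+\<^sub>1 - x\<^sub>0]\<close> for the difference quotient
  \<open>g(t) = (h(x\<^sub>0 + t) - h(x\<^sub>0)) / t\<close>.\<close>

lemma divided_difference_Suc:
  fixes x :: "nat \<Rightarrow> 'k::field" and h :: "nat \<Rightarrow> 'f::ab_group_add"
  assumes vs: "vector_space smul" and inj: "inj_on x {..Suc N}"
  shows "(\<Sum>m\<le>Suc N. smul (lagrange_weight x (Suc N) m) (h m))
       = (\<Sum>s\<le>N. smul (lagrange_weight (\<lambda>k. x (Suc k) - x 0) N s)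
                     (smul (inverse (x (Suc s) - x 0)) (h (Suc s) - h 0)))"
proof -
  interpret V: vector_space smul by (rule vs)
  let ?w = "lagrange_weight x (Suc N)"
  have w0: "?w 0 = - (\<Sum>s\<le>N. ?w (Suc s))"
    using sum_lagrange_weights_eq_0[OF inj] unfolding sum.atMost_Suc_shift
    by (simp add: eq_neg_iff_add_eq_0)
  have "(\<Sum>s\<le>N. smul (lagrange_weight (\<lambda>k. x (Suc k) - x 0) N s)
                  (smul (inverse (x (Suc s) - x 0)) (h (Suc s) - h 0)))
      = (\<Sum>s\<le>N. smul (?w (Suc s)) (h (Suc s)) - smul (?w (Suc s)) (h 0))"
    by (intro sum.cong refl)
       (simp add: lagrange_weight_shift V.scale_right_diff_distrib)
  also have "\<dots> = (\<Sum>s\<le>N. smul (?w (Suc s)) (h (Suc s))) - smul (\<Sum>s\<le>N. ?w (Suc s)) (h 0)"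
    by (simp add: sum_subtractf V.scale_sum_left)
  also have "\<dots> = (\<Sum>m\<le>Suc N. smul (?w m) (h m))"
    unfolding sum.atMost_Suc_shift[of "\<lambda>m. smul (?w m) (h m)"] w0 by simp
  finally show ?thesis by (rule sym)
qed

definition node_point :: "nat \<Rightarrow> (nat \<Rightarrow> nat \<Rightarrow> 'k::zero) \<Rightarrow> (nat \<Rightarrow> nat) \<Rightarrow> nat \<Rightarrow> 'k" where
  "node_point D X j = (\<lambda>i. if i < D then X i (j i) else 0)"

definition divdiff :: "('k::field \<Rightarrow> 'f::ab_group_add \<Rightarrow> 'f) \<Rightarrow> nat \<Rightarrow> (nat \<Rightarrow> nat)
    \<Rightarrow> (nat \<Rightarrow> nat \<Rightarrow> 'k) \<Rightarrow> ((nat \<Rightarrow> 'k) \<Rightarrow> 'f) \<Rightarrow> 'f" where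
  "divdiff smul D n X f =
     (\<Sum>j\<in>Pi\<^sub>E {..<D} (\<lambda>i. {..n i}).
        smul (\<Prod>i<D. lagrange_weight (X i) (n i) (j i)) (f (node_point D X j)))"

lemma node_point_cong: "(\<And>i. i < D \<Longrightarrow> j i = j' i) \<Longrightarrow> node_point D X j = node_point D X j'"
  by (auto simp: node_point_def)

lemma sel_eq_node_point: "sel d n x j = node_point d (unflatten n x) j"
  unfolding sel_def node_point_def unflatten_def ..

lemma fdd_eq_divdiff: "fdd smul D n f x = divdiff smul D n (unflatten n x) f"
  unfolding fdd_def divdiff_def lagrange_weight_def sel_eq_node_point by (simp add: unflatten_def)

lemma divdiff_cong:
  assumes "\<And>i j. i < D \<Longrightarrow> j \<le> n i \<Longrightarrow> X i j = Y i j"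
  shows "divdiff smul D n X f = divdiff smul D n Y f"
  unfolding divdiff_def
proof (intro sum.cong refl)
  fix j assume "j \<in> Pi\<^sub>E {..<D} (\<lambda>i. {..n i})"
  then have j: "\<And>i. i < D \<Longrightarrow> j i \<le> n i" by auto
  have "lagrange_weight (X i) (n i) (j i) = lagrange_weight (Y i) (n i) (j i)" if "i < D" for i
    unfolding lagrange_weight_def using that j by (intro prod.cong) (auto simp: assms)
  moreover have "node_point D X j = node_point D Y j"
    by (auto simp: node_point_def assms j)
  ultimately show "smul (\<Prod>i<D. lagrange_weight (X i) (n i) (j i)) (f (node_point D X j)) =
      smul (\<Prod>i<D. lagrange_weight (Y i) (n i) (j i)) (f (node_point D Y j))"
    by simp
qed

lemma fdd_flatten: "fdd smul D n f (flatten D n Y) = divdiff smul D n Y f"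
  unfolding fdd_eq_divdiff by (rule divdiff_cong) (simp add: unflatten_def flatten_pos)

lemma divdiff_split_row:
  fixes X :: "nat \<Rightarrow> nat \<Rightarrow> 'k::field"
  assumes vs: "vector_space smul" and l: "l < D"
  shows "divdiff smul D n X f =
    (\<Sum>j\<in>{j\<in>Pi\<^sub>E {..<D} (\<lambda>i. {..n i}). j l = 0}.
       smul (\<Prod>i\<in>{..<D} - {l}. lagrange_weight (X i) (n i) (j i))
         (\<Sum>m\<le>n l. smul (lagrange_weight (X l) (n l) m) (f (node_point D X (j(l := m))))))"
proof -
  interpret V: vector_space smul by (rule vs)
  define J0 where "J0 = {j\<in>Pi\<^sub>E {..<D} (\<lambda>i. {..n i}). j l = 0}"
  define w where "w j = (\<Prod>i<D. lagrange_weight (X i) (n i) (j i))" for j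
  have w_upd: "w (j(l := m)) = lagrange_weight (X l) (n l) m * (\<Prod>i\<in>{..<D} - {l}. lagrange_weight (X i) (n i) (j i))"
    for j m
    unfolding w_def using l by (subst prod.remove[of _ l]) auto
  have "divdiff smul D n X f = (\<Sum>(j, m)\<in>J0 \<times> {..n l}. smul (w (j(l := m))) (f (node_point D X (j(l := m)))))"
    unfolding divdiff_def w_def[symmetric]
  proof (rule sum.reindex_bij_witness[where i="\<lambda>(j, m). j(l := m)" and j="\<lambda>j. (j(l := 0), j l)"])
    fix j assume "j \<in> Pi\<^sub>E {..<D} (\<lambda>i. {..n i})"
    then show "(j(l := 0), j l) \<in> J0 \<times> {..n l}"
      using l by (auto simp: J0_def PiE_def extensional_def Pi_def)
  next
    fix jm assume "jm \<in> J0 \<times> {..n l}"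
    then show "(case jm of (j, m) \<Rightarrow> j(l := m)) \<in> Pi\<^sub>E {..<D} (\<lambda>i. {..n i})"
      using l by (auto simp: J0_def PiE_def extensional_def Pi_def)
  next
    fix j assume "j \<in> Pi\<^sub>E {..<D} (\<lambda>i. {..n i})"
    then show "(case (j(l := 0), j l) of (j, m) \<Rightarrow> j(l := m)) = j" by simp
  next
    fix jm assume "jm \<in> J0 \<times> {..n l}"
    then have "fst jm l = 0" by (simp add: J0_def mem_Times_iff)
    then show "(\<lambda>j. (j(l := 0), j l)) ((\<lambda>(j, m). j(l := m)) jm) = jm"
      by (cases jm) (simp add: fun_upd_idem)
  next
    fix j assume "j \<in> Pi\<^sub>E {..<D} (\<lambda>i. {..n i})"
    show "(case (j(l := 0), j l) of (j, m) \<Rightarrow> smul (w (j(l := m))) (f (node_point D X (j(l := m))))) =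
      smul (w j) (f (node_point D X j))" by simp
  qed
  also have "\<dots> = (\<Sum>j\<in>J0. \<Sum>m\<le>n l. smul (w (j(l := m))) (f (node_point D X (j(l := m)))))"
    by (rule sum.cartesian_product[symmetric])
  finally show ?thesis
    unfolding J0_def[symmetric] w_upd by (simp add: V.scale_sum_right mult.commute)
qed

section \<open>Nodes of the first difference quotient\<close>

text \<open>Nodes in \<open>\<bbbK>\<^sup>2\<^sup>d\<^sup>+\<^sup>1 = \<bbbK>\<^sup>d \<times> \<bbbK>\<^sup>d \<times> \<bbbK>\<close>, the domain of \<open>f\<^sup>[\<^sup>1\<^sup>]\<close>, built from nodes \<open>X\<close>
  of orders \<open>n\<close> with \<open>n l \<ge> 1\<close>: the \<open>x\<close>-rows repeat \<open>X\<close> except that row \<open>l\<close> collapses to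
  its first node, the \<open>y\<close>-rows form \<open>c e\<^sub>l\<close>, and the \<open>t\<close>-row holds the differences
  \<open>X l (j + 1) - X l 0\<close>. The nodes proper have \<open>c = 1\<close>; \<open>c = 0\<close> gives the linear part of
  this affine construction.\<close>

definition bgn_nodes :: "nat \<Rightarrow> nat \<Rightarrow> 'k::field \<Rightarrow> (nat \<Rightarrow> nat \<Rightarrow> 'k) \<Rightarrow> nat \<Rightarrow> nat \<Rightarrow> 'k" where
  "bgn_nodes d l c X i j =
     (if i < d then (if i = l then X l 0 else X i j)
      else if i < 2 * d then (if i - d = l then c else 0)
      else X l (Suc j) - X l 0)"

definition bgn_orders :: "nat \<Rightarrow> nat \<Rightarrow> (nat \<Rightarrow> nat) \<Rightarrow> nat \<Rightarrow> nat" where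
  "bgn_orders d l n i =
     (if i < d then (if i = l then 0 else n i) else if i = 2 * d then n l - 1 else 0)"

lemma absa_bgn_orders:
  assumes l: "l < d" and n: "1 \<le> n l"
  shows "absa (2 * d + 1) (bgn_orders d l n) = absa d n - 1"
proof -
  let ?\<beta> = "bgn_orders d l n"
  have "(\<Sum>i<2 * d. ?\<beta> i) = (\<Sum>i<d. ?\<beta> i)"
    by (rule sum.mono_neutral_right) (auto simp: bgn_orders_def)
  also have "\<dots> = (\<Sum>i\<in>{..<d} - {l}. n i)"
    using l by (simp add: sum.remove[of _ l] bgn_orders_def)
  finally have "absa (2 * d + 1) ?\<beta> = n l - 1 + (\<Sum>i\<in>{..<d} - {l}. n i)"
    using l by (simp add: absa_def bgn_orders_def)
  moreover have "absa d n = n l + (\<Sum>i\<in>{..<d} - {l}. n i)"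
    using l by (simp add: absa_def sum.remove)
  ultimately show ?thesis using n by simp
qed

lemma node_point_bgn_nodes:
  fixes X :: "nat \<Rightarrow> nat \<Rightarrow> 'k::field"
  assumes l: "l < d" and z: "z = node_point (2 * d + 1) (bgn_nodes d l 1 X) e"
  shows "xpart d z = node_point d X (e(l := 0))"
    and "shifted d z = node_point d X (e(l := Suc (e (2 * d))))"
    and "z (2 * d) = X l (Suc (e (2 * d))) - X l 0"
    and "z \<in> Km (2 * d + 1)"
proof -
  show x: "xpart d z = node_point d X (e(l := 0))"
    using l by (auto simp: z xpart_def node_point_def bgn_nodes_def)
  show t: "z (2 * d) = X l (Suc (e (2 * d))) - X l 0"
    by (simp add: z node_point_def bgn_nodes_def)
  have "ypart d z = (\<lambda>i. if i = l then 1 else 0)"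
    using l by (auto simp: z ypart_def node_point_def bgn_nodes_def)
  then show "shifted d z = node_point d X (e(l := Suc (e (2 * d))))"
    using l unfolding shifted_def x t by (auto simp: node_point_def)
  show "z \<in> Km (2 * d + 1)"
    by (simp add: z Km_def node_point_def)
qed

lemma bgn_point_in_V1:
  fixes X :: "nat \<Rightarrow> nat \<Rightarrow> 'k::field"
  assumes l: "l < d" and n: "1 \<le> n l"
    and U: "\<And>j. \<forall>i<d. j i \<le> n i \<Longrightarrow> node_point d X j \<in> U"
    and e: "\<forall>i<2 * d + 1. e i \<le> bgn_orders d l n i"
  shows "node_point (2 * d + 1) (bgn_nodes d l 1 X) e \<in> V1 d U"
proof -
  note z = node_point_bgn_nodes[OF l refl, of X e]
  have "(e(l := m)) i \<le> n i" if "i < d" "m \<le> n l" for i m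
    using e[rule_format, of i] that by (auto simp: bgn_orders_def)
  moreover have "Suc (e (2 * d)) \<le> n l"
    using e[rule_format, of "2 * d"] n by (simp add: bgn_orders_def)
  ultimately show ?thesis
    unfolding V1_def using z by (auto intro: U)
qed

lemma dquot_at_bgn_point:
  fixes X :: "nat \<Rightarrow> nat \<Rightarrow> 'k::field"
  assumes l: "l < d" and n: "1 \<le> n l" and inj: "inj_on (X l) {..n l}"
    and U: "\<And>j. \<forall>i<d. j i \<le> n i \<Longrightarrow> node_point d X j \<in> U"
    and G: "\<forall>z\<in>V1' d U. G z = dquot smul d f z"
    and e: "\<forall>i<2 * d + 1. e i \<le> bgn_orders d l n i"
  shows "G (node_point (2 * d + 1) (bgn_nodes d l 1 X) e) =
    smul (inverse (X l (Suc (e (2 * d))) - X l 0))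
      (f (node_point d X (e(l := Suc (e (2 * d))))) - f (node_point d X (e(l := 0))))"
proof -
  note z = node_point_bgn_nodes[OF l refl, of X e]
  have "Suc (e (2 * d)) \<le> n l"
    using e[rule_format, of "2 * d"] n by (simp add: bgn_orders_def)
  then have "X l (Suc (e (2 * d))) \<noteq> X l 0"
    using inj by (auto dest: inj_onD)
  then have "node_point (2 * d + 1) (bgn_nodes d l 1 X) e \<in> V1' d U"
    using bgn_point_in_V1[OF l n U e] z by (simp add: V1'_def)
  then show ?thesis
    using G z by (simp add: dquot_def)
qed

lemma prod_lagrange_weight_bgn_nodes:
  assumes l: "l < d" and e: "\<forall>i<2 * d + 1. e i \<le> bgn_orders d l n i"
  shows "(\<Prod>i\<in>{..<2 * d + 1} - {2 * d}. lagrange_weight (bgn_nodes d l c X i) (bgn_orders d l n i) (e i))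
       = (\<Prod>i\<in>{..<d} - {l}. lagrange_weight (X i) (n i) (e i))"
proof (rule prod.mono_neutral_cong_right)
  show "\<forall>i\<in>{..<2 * d + 1} - {2 * d} - ({..<d} - {l}).
      lagrange_weight (bgn_nodes d l c X i) (bgn_orders d l n i) (e i) = 1"
  proof
    fix i assume i: "i \<in> {..<2 * d + 1} - {2 * d} - ({..<d} - {l})"
    then have "bgn_orders d l n i = 0"
      by (simp add: bgn_orders_def)
    moreover have "e i \<le> bgn_orders d l n i"
      using e i by simp
    ultimately show "lagrange_weight (bgn_nodes d l c X i) (bgn_orders d l n i) (e i) = 1"
      by simp
  qed
next
  fix i assume i: "i \<in> {..<d} - {l}"
  then have "bgn_nodes d l c X i = X i" "bgn_orders d l n i = n i"
    by (simp_all add: bgn_nodes_def bgn_orders_def fun_eq_iff)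
  then show "lagrange_weight (bgn_nodes d l c X i) (bgn_orders d l n i) (e i) =
      lagrange_weight (X i) (n i) (e i)"
    by simp
qed (use l in auto)

lemma sum_restrict_bgn_orders:
  assumes l: "l < d"
  shows "(\<Sum>e\<in>{e\<in>Pi\<^sub>E {..<2 * d + 1} (\<lambda>i. {..bgn_orders d l n i}). e (2 * d) = 0}. g (restrict e {..<d}))
       = (\<Sum>j\<in>{j\<in>Pi\<^sub>E {..<d} (\<lambda>i. {..n i}). j l = 0}. g j)"
proof (rule sum.reindex_bij_witness[where j="\<lambda>e. restrict e {..<d}"
      and i="\<lambda>j i. if i < d then j i else if i \<le> 2 * d then 0 else undefined"])
  fix e assume e: "e \<in> {e\<in>Pi\<^sub>E {..<2 * d + 1} (\<lambda>i. {..bgn_orders d l n i}). e (2 * d) = 0}"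
  then have e_le: "e i \<le> bgn_orders d l n i" if "i < 2 * d + 1" for i
    using that by (simp add: PiE_iff)
  have e_undef: "e i = undefined" if "\<not> i < 2 * d + 1" for i
    using e that by (simp add: PiE_iff extensional_def)
  have e_zero: "e i = 0" if "d \<le> i" "i \<le> 2 * d" for i
    using e e_le[of i] that by (cases "i = 2 * d") (auto simp: bgn_orders_def)
  show "(\<lambda>i. if i < d then restrict e {..<d} i else if i \<le> 2 * d then 0 else undefined) = e"
    using e_undef e_zero by (auto simp: fun_eq_iff)
  have "e l = 0"
    using e_le[of l] l by (simp add: bgn_orders_def)
  moreover have "e i \<le> n i" if "i < d" for i
    using e_le[of i] that by (simp add: bgn_orders_def split: if_splits)
  ultimately show "restrict e {..<d} \<in> {j\<in>Pi\<^sub>E {..<d} (\<lambda>i. {..n i}). j l = 0}"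
    by (simp add: PiE_iff l)
next
  fix j assume j: "j \<in> {j\<in>Pi\<^sub>E {..<d} (\<lambda>i. {..n i}). j l = 0}"
  then show "restrict (\<lambda>i. if i < d then j i else if i \<le> 2 * d then 0 else undefined) {..<d} = j"
    by (auto simp: PiE_iff extensional_def fun_eq_iff)
  show "(\<lambda>i. if i < d then j i else if i \<le> 2 * d then 0 else undefined)
      \<in> {e\<in>Pi\<^sub>E {..<2 * d + 1} (\<lambda>i. {..bgn_orders d l n i}). e (2 * d) = 0}"
    using j l by (auto simp: bgn_orders_def PiE_iff extensional_def)
qed simp

lemma divdiff_bgn_nodes:
  fixes X :: "nat \<Rightarrow> nat \<Rightarrow> 'k::field"
  assumes vs: "vector_space smul" and l: "l < d" and n: "n l = Suc N"
    and inj: "inj_on (X l) {..n l}"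
    and U: "\<And>j. \<forall>i<d. j i \<le> n i \<Longrightarrow> node_point d X j \<in> U"
    and G: "\<forall>z\<in>V1' d U. G z = dquot smul d f z"
  shows "divdiff smul (2 * d + 1) (bgn_orders d l n) (bgn_nodes d l 1 X) G = divdiff smul d n X f"
proof -
  let ?\<beta> = "bgn_orders d l n" and ?Y = "bgn_nodes d l 1 X"
  let ?w = "lagrange_weight (\<lambda>k. X l (Suc k) - X l 0) N"
  define B0 where "B0 = {e\<in>Pi\<^sub>E {..<2 * d + 1} (\<lambda>i. {..?\<beta> i}). e (2 * d) = 0}"
  define W where "W j = (\<Prod>i\<in>{..<d} - {l}. lagrange_weight (X i) (n i) (j i))" for j
  define h where "h j m = f (node_point d X (j(l := m)))" for j m
  have \<beta>: "?\<beta> (2 * d) = N"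
    using n by (simp add: bgn_orders_def)
  have e_le: "\<forall>i<2 * d + 1. e i \<le> ?\<beta> i" if "e \<in> B0" for e
    using that by (simp add: B0_def PiE_iff)
  have G_at: "G (node_point (2 * d + 1) ?Y (e(2 * d := s))) =
      smul (inverse (X l (Suc s) - X l 0)) (h (restrict e {..<d}) (Suc s) - h (restrict e {..<d}) 0)"
    if "e \<in> B0" "s \<le> N" for e s
  proof -
    have "\<forall>i<2 * d + 1. (e(2 * d := s)) i \<le> ?\<beta> i"
      using e_le[OF that(1)] \<beta> that(2) by simp
    moreover have "node_point d X ((e(2 * d := s))(l := m)) = node_point d X ((restrict e {..<d})(l := m))"
      for m by (rule node_point_cong) auto
    moreover have "1 \<le> n l"
      using n by simp
    ultimately show ?thesis
      using dquot_at_bgn_point[where n=n, OF l _ inj U G] unfolding h_def by simp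
  qed
  have "divdiff smul (2 * d + 1) ?\<beta> ?Y G =
      (\<Sum>e\<in>B0. smul (\<Prod>i\<in>{..<2 * d + 1} - {2 * d}. lagrange_weight (?Y i) (?\<beta> i) (e i))
         (\<Sum>s\<le>N. smul (?w s) (G (node_point (2 * d + 1) ?Y (e(2 * d := s))))))"
  proof -
    have "?Y (2 * d) = (\<lambda>k. X l (Suc k) - X l 0)"
      by (simp add: bgn_nodes_def fun_eq_iff)
    then show ?thesis
      using divdiff_split_row[OF vs, of "2 * d" "2 * d + 1" ?\<beta> ?Y G] \<beta> by (simp add: B0_def)
  qed
  also have "\<dots> = (\<Sum>e\<in>B0. smul (W (restrict e {..<d}))
      (\<Sum>s\<le>N. smul (?w s) (smul (inverse (X l (Suc s) - X l 0))
        (h (restrict e {..<d}) (Suc s) - h (restrict e {..<d}) 0))))"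
    using prod_lagrange_weight_bgn_nodes[where c=1 and X=X, OF l e_le] G_at
    by (intro sum.cong refl) (simp add: W_def)
  also have "\<dots> = (\<Sum>j\<in>{j\<in>Pi\<^sub>E {..<d} (\<lambda>i. {..n i}). j l = 0}. smul (W j)
      (\<Sum>s\<le>N. smul (?w s) (smul (inverse (X l (Suc s) - X l 0)) (h j (Suc s) - h j 0))))"
    unfolding B0_def by (rule sum_restrict_bgn_orders[OF l])
  also have "\<dots> = (\<Sum>j\<in>{j\<in>Pi\<^sub>E {..<d} (\<lambda>i. {..n i}). j l = 0}.
      smul (W j) (\<Sum>m\<le>Suc N. smul (lagrange_weight (X l) (Suc N) m) (h j m)))"
    using divided_difference_Suc[OF vs] inj n by simp
  also have "\<dots> = divdiff smul d n X f"
    using divdiff_split_row[OF vs l, of n X f] by (simp add: W_def h_def n)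
  finally show ?thesis .
qed

definition bgn_lift :: "nat \<Rightarrow> nat \<Rightarrow> (nat \<Rightarrow> nat) \<Rightarrow> 'k::field \<Rightarrow> (nat \<Rightarrow> 'k) \<Rightarrow> nat \<Rightarrow> 'k" where
  "bgn_lift d l n c x = flatten (2 * d + 1) (bgn_orders d l n) (bgn_nodes d l c (unflatten n x))"

lemma continuous_on_diff_top_field:
  fixes g h :: "'a::topological_space \<Rightarrow> 'k::{field,t2_space,perfect_space}"
  assumes tf: "top_field TYPE('k)" and g: "continuous_on S g" and h: "continuous_on S h"
  shows "continuous_on S (\<lambda>x. g x - h x)"
proof -
  have add: "continuous_on UNIV (\<lambda>p::'k \<times> 'k. fst p + snd p)"
    and neg: "continuous_on UNIV (\<lambda>x::'k. - x)"
    using tf by (auto simp: top_field_def)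
  have "continuous_on S (\<lambda>x. (g x, - h x))"
    by (intro continuous_on_Pair g continuous_on_compose2[OF neg h]) auto
  then have "continuous_on S (\<lambda>x. fst (g x, - h x) + snd (g x, - h x))"
    by (rule continuous_on_compose2[OF add]) auto
  then show ?thesis by simp
qed

lemma continuous_bgn_lift:
  assumes tf: "top_field TYPE('k::{field,t2_space,perfect_space})"
  shows "continuous_on UNIV (bgn_lift d l n (c::'k))"
proof (rule continuous_on_coordinatewise_then_product)
  fix p
  have coord: "continuous_on UNIV (\<lambda>x::nat \<Rightarrow> 'k. x q)" for q
    by simp
  have diff: "continuous_on UNIV (\<lambda>x::nat \<Rightarrow> 'k. x q - x r)" for q r
    by (rule continuous_on_diff_top_field[OF tf coord coord])
  define i where "i = block_of (bgn_orders d l n) p"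
  define j where "j = p - block_start (bgn_orders d l n) i"
  have eq: "(\<lambda>x. bgn_lift d l n c x p) = (\<lambda>x. if i < 2 * d + 1 then bgn_nodes d l c (unflatten n x) i j else 0)"
    unfolding bgn_lift_def flatten_def i_def j_def ..
  show "continuous_on UNIV (\<lambda>x. bgn_lift d l n c x p)"
    unfolding eq
    by (cases "i < d"; cases "i = l"; cases "i < 2 * d"; cases "i = 2 * d"; cases "i - d = l")
      (simp_all add: bgn_nodes_def unflatten_def coord diff)
qed

lemma bgn_lift_diff:
  "(\<lambda>p. bgn_lift d l n 1 y p - bgn_lift d l n 1 x p) = bgn_lift d l n 0 (\<lambda>q. y q - x q)"
  for x y :: "nat \<Rightarrow> 'k::field"
  by (rule ext) (simp add: bgn_lift_def flatten_def bgn_nodes_def unflatten_def algebra_simps)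

lemma bgn_lift_scale: "bgn_lift d l n 0 (\<lambda>q. t * v q) = (\<lambda>p. t * bgn_lift d l n 0 v p)"
  for v :: "nat \<Rightarrow> 'k::field"
  by (rule ext) (simp add: bgn_lift_def flatten_def bgn_nodes_def unflatten_def algebra_simps)

lemma bgn_lift_in_Km: "bgn_lift d l n c x \<in> Km (2 * d + 1 + absa (2 * d + 1) (bgn_orders d l n))"
  unfolding bgn_lift_def by (rule flatten_in_Km)

lemma sel_bgn_lift:
  assumes "\<forall>i<2 * d + 1. j i \<le> bgn_orders d l n i"
  shows "sel (2 * d + 1) (bgn_orders d l n) (bgn_lift d l n c x) j =
         node_point (2 * d + 1) (bgn_nodes d l c (unflatten n x)) j"
  using assms by (auto simp: sel_def node_point_def bgn_lift_def flatten_pos)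

lemma node_point_in_Ualpha:
  assumes "x \<in> Ualpha d n U" "\<forall>i<d. j i \<le> n i"
  shows "node_point d (unflatten n x) j \<in> U"
  using assms by (simp add: Ualpha_def sel_eq_node_point)

lemma bgn_lift_Ualpha:
  assumes l: "l < d" and n: "1 \<le> n l" and x: "x \<in> Ualpha d n U"
  shows "bgn_lift d l n 1 x \<in> Ualpha (2 * d + 1) (bgn_orders d l n) (V1 d U)"
  unfolding Ualpha_def
proof (intro CollectI conjI allI impI)
  show "bgn_lift d l n 1 x \<in> Km (2 * d + 1 + absa (2 * d + 1) (bgn_orders d l n))"
    by (rule bgn_lift_in_Km)
  have U: "\<And>j. \<forall>i<d. j i \<le> n i \<Longrightarrow> node_point d (unflatten n x) j \<in> U"
    by (rule node_point_in_Ualpha[OF x])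
  fix j assume j: "\<forall>i<2 * d + 1. j i \<le> bgn_orders d l n i"
  show "sel (2 * d + 1) (bgn_orders d l n) (bgn_lift d l n 1 x) j \<in> V1 d U"
    unfolding sel_bgn_lift[OF j] by (rule bgn_point_in_V1[where n=n, OF l n U j])
qed

lemma bgn_lift_Ualpha':
  assumes l: "l < d" and n: "1 \<le> n l" and x: "x \<in> Ualpha' d n U"
  shows "bgn_lift d l n 1 x \<in> Ualpha' (2 * d + 1) (bgn_orders d l n) (V1 d U)"
proof -
  let ?\<beta> = "bgn_orders d l n" and ?z = "bgn_lift d l n 1 x"
  have distinct: "x (pos n i j) \<noteq> x (pos n i k)"
    if "i < d" "j \<le> n i" "k \<le> n i" "j \<noteq> k" for i j k
    using x that by (auto simp: Ualpha'_def)
  have "?z (pos ?\<beta> i j) \<noteq> ?z (pos ?\<beta> i k)"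
    if i: "i < 2 * d + 1" and j: "j \<le> ?\<beta> i" and k: "k \<le> ?\<beta> i" and jk: "j \<noteq> k" for i j k
  proof -
    have z: "?z (pos ?\<beta> i m) = bgn_nodes d l 1 (unflatten n x) i m" if "m \<le> ?\<beta> i" for m
      using i that by (simp add: bgn_lift_def flatten_pos)
    consider "i < d" "i \<noteq> l" | "i = 2 * d" | "?\<beta> i = 0"
      using i by (cases "i < d"; cases "i = l"; cases "i = 2 * d") (auto simp: bgn_orders_def)
    then show ?thesis
    proof cases
      case 1
      then show ?thesis using j k jk z distinct[of i j k]
        by (simp add: bgn_orders_def bgn_nodes_def unflatten_def)
    next
      case 2
      then have "Suc j \<le> n l" "Suc k \<le> n l"
        using j k l n by (auto simp: bgn_orders_def)
      then show ?thesis using 2 l jk z[OF j] z[OF k] distinct[of l "Suc j" "Suc k"]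
        by (simp add: bgn_nodes_def unflatten_def)
    next
      case 3
      then show ?thesis using j k jk by simp
    qed
  qed
  then show ?thesis
    using bgn_lift_Ualpha[where n=n, OF l n] x by (auto simp: Ualpha'_def)
qed

lemma fdd_bgn_lift:
  fixes f :: "(nat \<Rightarrow> 'k::field) \<Rightarrow> 'f::ab_group_add"
  assumes vs: "vector_space smul" and l: "l < d" and n: "1 \<le> n l"
    and G: "\<forall>z\<in>V1' d U. G z = dquot smul d f z" and x: "x \<in> Ualpha' d n U"
  shows "fdd smul (2 * d + 1) (bgn_orders d l n) G (bgn_lift d l n 1 x) = fdd smul d n f x"
proof -
  obtain N where N: "n l = Suc N"
    using n by (cases "n l") auto
  have "inj_on (unflatten n x l) {..n l}"
    using x l by (auto simp: Ualpha'_def inj_on_def unflatten_def)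
  moreover have "x \<in> Ualpha d n U"
    using x by (simp add: Ualpha'_def)
  then have "\<And>j. \<forall>i<d. j i \<le> n i \<Longrightarrow> node_point d (unflatten n x) j \<in> U"
    by (rule node_point_in_Ualpha)
  ultimately show ?thesis
    unfolding bgn_lift_def fdd_flatten fdd_eq_divdiff[of smul d n f x]
    by (rule divdiff_bgn_nodes[where X="unflatten n x" and n=n and U=U, OF vs l N _ _ G])
qed

section \<open>Extension of divided differences\<close>

lemma absa_eq_0_iff: "absa d n = 0 \<longleftrightarrow> (\<forall>i<d. n i = 0)"
  by (auto simp: absa_def)

lemma sel_order_0:
  assumes n: "absa d n = 0" and x: "x \<in> Km d" and j: "\<forall>i<d. j i \<le> n i"
  shows "sel d n x j = x"
proof
  fix i
  have "pos n i (j i) = i" if "i < d"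
  proof -
    have "pos n i (j i) = (\<Sum>k<i. Suc (n k))"
      using n j that by (simp add: pos_def absa_eq_0_iff)
    also have "\<dots> = i"
      using n that by (simp add: absa_eq_0_iff)
    finally show ?thesis .
  qed
  then show "sel d n x j i = x i"
    using x by (simp add: sel_def Km_def)
qed

lemma Ualpha_order_0:
  assumes n: "absa d n = 0"
  shows "Ualpha d n U = U \<inter> Km d"
proof (intro set_eqI iffI)
  fix x assume x: "x \<in> Ualpha d n U"
  then have "x \<in> Km d" and "sel d n x (\<lambda>_. 0) \<in> U"
    using n by (simp_all add: Ualpha_def)
  then show "x \<in> U \<inter> Km d"
    using sel_order_0[OF n, of x "\<lambda>_. 0"] by simp
next
  fix x assume x: "x \<in> U \<inter> Km d"
  have "sel d n x j = x" if "\<forall>i<d. j i \<le> n i" for j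
    by (rule sel_order_0[OF n _ that]) (use x in simp)
  then show "x \<in> Ualpha d n U"
    using x n by (simp add: Ualpha_def)
qed

lemma fdd_order_0:
  assumes vs: "vector_space smul" and n: "absa d n = 0" and x: "x \<in> Km d"
  shows "fdd smul d n f x = f x"
proof -
  interpret V: vector_space smul by (rule vs)
  define j0 where "j0 = restrict (\<lambda>_. 0::nat) {..<d}"
  have "Pi\<^sub>E {..<d} (\<lambda>i. {..n i}) = Pi\<^sub>E {..<d} (\<lambda>i. {j0 i})"
    using n by (intro PiE_cong) (auto simp: absa_eq_0_iff j0_def)
  also have "\<dots> = {j0}"
    by (rule PiE_singleton) (auto simp: j0_def extensional_def)
  finally have "Pi\<^sub>E {..<d} (\<lambda>i. {..n i}) = {j0}" .
  moreover have "sel d n x j0 = x"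
    using n x by (intro sel_order_0) (auto simp: j0_def absa_eq_0_iff)
  ultimately show ?thesis
    using n by (simp add: fdd_def absa_eq_0_iff j0_def)
qed

lemma fdd_extension_order_0:
  assumes vs: "vector_space smul" and n: "absa d n = 0" and f: "continuous_on U f"
  shows "continuous_on (Ualpha d n U) f" and "\<forall>x\<in>Ualpha' d n U. f x = fdd smul d n f x"
proof -
  show "continuous_on (Ualpha d n U) f"
    using f by (simp add: Ualpha_order_0[OF n] continuous_on_subset)
  show "\<forall>x\<in>Ualpha' d n U. f x = fdd smul d n f x"
  proof
    fix x assume "x \<in> Ualpha' d n U"
    then have "x \<in> Km d"
      using Ualpha_order_0[OF n] by (auto simp: Ualpha'_def)
    then show "f x = fdd smul d n f x"
      by (simp add: fdd_order_0[OF vs n])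
  qed
qed

lemma BGN_imp_continuous: "BGN smul k m V g \<Longrightarrow> continuous_on V g"
  by (cases k) auto

lemma BGNH_imp_holder: "BGNH av smul \<sigma> k m V g \<Longrightarrow> continuous_on V g \<and> holder av smul \<sigma> m V g"
  by (cases k) auto

lemma holder_subset:
  assumes "holder av smul \<sigma> m V g" and "V' \<subseteq> V"
  shows "holder av smul \<sigma> m V' g"
  using assms unfolding holder_def by (meson Int_mono order_refl subsetD)

lemma BGNH_fdd_extension_order_0:
  assumes vs: "vector_space smul" and f: "BGNH av smul \<sigma> k d U f" and n: "absa d n = 0"
  shows "\<exists>G. continuous_on (Ualpha d n U) G \<and> (\<forall>x\<in>Ualpha' d n U. G x = fdd smul d n f x) \<and>
    holder av smul \<sigma> (d + absa d n) (Ualpha d n U) G"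
proof (intro exI conjI)
  show "continuous_on (Ualpha d n U) f" and "\<forall>x\<in>Ualpha' d n U. f x = fdd smul d n f x"
    using fdd_extension_order_0[OF vs n] BGNH_imp_holder[OF f] by auto
  show "holder av smul \<sigma> (d + absa d n) (Ualpha d n U) f"
    using BGNH_imp_holder[OF f] n by (auto simp: Ualpha_order_0 intro: holder_subset)
qed

text \<open>A gauge \<open>p\<close> for the target of the affine map pulls back to the gauge \<open>p \<circ> L\<close>
  along its continuous linear part \<open>L\<close>.\<close>

lemma holder_compose_affine:
  fixes Phi L :: "(nat \<Rightarrow> 'k::{field,topological_space}) \<Rightarrow> nat \<Rightarrow> 'k"
  assumes H: "holder av smul \<sigma> m' V' H"
    and Phi: "continuous_on UNIV Phi" and L: "continuous_on UNIV L"
    and affine: "\<And>x y. (\<lambda>i. Phi y i - Phi x i) = L (\<lambda>i. y i - x i)"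
    and scale: "\<And>t v. L (\<lambda>i. t * v i) = (\<lambda>i. t * L v i)"
    and L_Km: "\<And>v. L v \<in> Km m'"
    and img: "Phi ` V \<subseteq> V'"
  shows "holder av smul \<sigma> m V (\<lambda>x. H (Phi x))"
  unfolding holder_def
proof (intro ballI allI impI)
  fix x0 q assume x0: "x0 \<in> V" and q: "gaugeF av smul q"
  obtain p W where p: "gaugeE av m' p" and W: "open W" "Phi x0 \<in> W"
    and ineq: "\<forall>x\<in>V' \<inter> W. \<forall>y\<in>V' \<inter> W. q (H y - H x) \<le> p (\<lambda>i. y i - x i) powr \<sigma>"
    using H q img x0 unfolding holder_def by blast
  have open_vimage: "open (g -` B)" if "continuous_on UNIV g" "open B" for g :: "(nat \<Rightarrow> 'k) \<Rightarrow> nat \<Rightarrow> 'k" and B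
    using continuous_on_open_vimage[of UNIV g] that by auto
  have "gaugeE av m (\<lambda>v. p (L v))"
    unfolding gaugeE_def
  proof (intro conjI ballI allI impI)
    fix v :: "nat \<Rightarrow> 'k" and t
    show "0 \<le> p (L v)" and "p (L (\<lambda>i. t * v i)) = av t * p (L v)"
      using p L_Km unfolding gaugeE_def scale by blast+
  next
    fix r :: real assume "r > 0"
    then obtain N where N: "open N" "(\<lambda>_. 0) \<in> N" "N \<inter> Km m' \<subseteq> {x. p x < r}"
      using p unfolding gaugeE_def by blast
    have "L (\<lambda>_. 0) = (\<lambda>_. 0)"
      using scale[of 0 "\<lambda>_. 0"] by simp
    then show "\<exists>N. open N \<and> (\<lambda>_. 0) \<in> N \<and> N \<inter> Km m \<subseteq> {x. p (L x) < r}"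
      using N L_Km by (intro exI[of _ "L -` N"]) (auto intro: open_vimage[OF L])
  qed
  moreover have "q (H (Phi y) - H (Phi x)) \<le> p (L (\<lambda>i. y i - x i)) powr \<sigma>"
    if "x \<in> V \<inter> Phi -` W" "y \<in> V \<inter> Phi -` W" for x y
    using ineq that img by (auto simp flip: affine)
  ultimately show "\<exists>p W. gaugeE av m p \<and> open W \<and> x0 \<in> W \<and>
      (\<forall>x\<in>V \<inter> W. \<forall>y\<in>V \<inter> W. q (H (Phi y) - H (Phi x)) \<le> p (\<lambda>i. y i - x i) powr \<sigma>)"
    using W open_vimage[OF Phi W(1)] by blast
qed

lemma fdd_extension_via_bgn_lift:
  assumes tf: "top_field TYPE('k::{field,t2_space,perfect_space})"
    and vs: "vector_space (smul :: 'k \<Rightarrow> 'f::{ab_group_add,topological_space} \<Rightarrow> 'f)"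
    and l: "l < d" and n: "1 \<le> n l"
    and G1: "\<forall>z\<in>V1' d U. G1 z = dquot smul d f z"
    and Gb_cont: "continuous_on (Ualpha (2 * d + 1) (bgn_orders d l n) (V1 d U)) Gb"
    and Gb: "\<forall>x\<in>Ualpha' (2 * d + 1) (bgn_orders d l n) (V1 d U).
               Gb x = fdd smul (2 * d + 1) (bgn_orders d l n) G1 x"
  shows "continuous_on (Ualpha d n U) (\<lambda>x. Gb (bgn_lift d l n 1 x))"
    and "\<forall>x\<in>Ualpha' d n U. Gb (bgn_lift d l n 1 x) = fdd smul d n f x"
proof -
  show "continuous_on (Ualpha d n U) (\<lambda>x. Gb (bgn_lift d l n 1 x))"
    by (rule continuous_on_compose2[OF Gb_cont continuous_on_subset[OF continuous_bgn_lift[OF tf]]])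
      (use bgn_lift_Ualpha[where n=n, OF l n] in auto)
  show "\<forall>x\<in>Ualpha' d n U. Gb (bgn_lift d l n 1 x) = fdd smul d n f x"
  proof
    fix x assume x: "x \<in> Ualpha' d n U"
    have "Gb (bgn_lift d l n 1 x) = fdd smul (2 * d + 1) (bgn_orders d l n) G1 (bgn_lift d l n 1 x)"
      using Gb bgn_lift_Ualpha'[where n=n, OF l n x] by blast
    also have "\<dots> = fdd smul d n f x"
      by (rule fdd_bgn_lift[where n=n, OF vs l n G1 x])
    finally show "Gb (bgn_lift d l n 1 x) = fdd smul d n f x" .
  qed
qed

lemma absa_neq_0E:
  assumes "absa d n \<noteq> 0"
  obtains l where "l < d" "1 \<le> n l"
  using assms by (auto simp: absa_eq_0_iff)

lemma BGN_imp_fdd_extension: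
  assumes tf: "top_field TYPE('k::{field,t2_space,perfect_space})"
    and vs: "vector_space (smul :: 'k \<Rightarrow> 'f::{ab_group_add,t2_space} \<Rightarrow> 'f)"
  shows "BGN smul k d U f \<Longrightarrow> absa d n \<le> k \<Longrightarrow>
    \<exists>G. continuous_on (Ualpha d n U) G \<and> (\<forall>x\<in>Ualpha' d n U. G x = fdd smul d n f x)"
proof (induction k arbitrary: d U f n)
  case 0
  then show ?case
    using fdd_extension_order_0[OF vs _ BGN_imp_continuous] by blast
next
  case (Suc k)
  show ?case
  proof (cases "absa d n = 0")
    case True
    then show ?thesis
      using fdd_extension_order_0[OF vs _ BGN_imp_continuous[OF Suc.prems(1)]] by blast
  next
    case False
    then obtain l where l: "l < d" "1 \<le> n l"
      by (rule absa_neq_0E)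
    obtain G1 where G1: "\<forall>z\<in>V1' d U. G1 z = dquot smul d f z" "BGN smul k (2 * d + 1) (V1 d U) G1"
      using Suc.prems(1) by auto
    have "absa (2 * d + 1) (bgn_orders d l n) \<le> k"
      using absa_bgn_orders[where n=n, OF l] Suc.prems(2) by simp
    with Suc.IH[OF G1(2)] obtain Gb
      where "continuous_on (Ualpha (2 * d + 1) (bgn_orders d l n) (V1 d U)) Gb"
        and "\<forall>x\<in>Ualpha' (2 * d + 1) (bgn_orders d l n) (V1 d U).
               Gb x = fdd smul (2 * d + 1) (bgn_orders d l n) G1 x"
      by blast
    from fdd_extension_via_bgn_lift[OF tf vs l G1(1) this] show ?thesis
      by blast
  qed
qed

lemma BGNH_imp_fdd_extension:
  assumes tf: "top_field TYPE('k::{field,t2_space,perfect_space})"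
    and vs: "vector_space (smul :: 'k \<Rightarrow> 'f::{ab_group_add,t2_space} \<Rightarrow> 'f)"
  shows "BGNH av smul \<sigma> k d U f \<Longrightarrow> absa d n \<le> k \<Longrightarrow>
    \<exists>G. continuous_on (Ualpha d n U) G \<and> (\<forall>x\<in>Ualpha' d n U. G x = fdd smul d n f x) \<and>
        holder av smul \<sigma> (d + absa d n) (Ualpha d n U) G"
proof (induction k arbitrary: d U f n)
  case 0
  then show ?case
    using BGNH_fdd_extension_order_0[OF vs "0.prems"(1)] by simp
next
  case (Suc k)
  show ?case
  proof (cases "absa d n = 0")
    case True
    then show ?thesis
      by (rule BGNH_fdd_extension_order_0[OF vs Suc.prems(1)])
  next
    case False
    then obtain l where l: "l < d" "1 \<le> n l"
      by (rule absa_neq_0E)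
    obtain G1 where G1: "\<forall>z\<in>V1' d U. G1 z = dquot smul d f z" "BGNH av smul \<sigma> k (2 * d + 1) (V1 d U) G1"
      using Suc.prems(1) by auto
    have "absa (2 * d + 1) (bgn_orders d l n) \<le> k"
      using absa_bgn_orders[where n=n, OF l] Suc.prems(2) by simp
    with Suc.IH[OF G1(2)] obtain Gb
      where Gb: "continuous_on (Ualpha (2 * d + 1) (bgn_orders d l n) (V1 d U)) Gb"
        "\<forall>x\<in>Ualpha' (2 * d + 1) (bgn_orders d l n) (V1 d U).
           Gb x = fdd smul (2 * d + 1) (bgn_orders d l n) G1 x"
        and Gb_holder: "holder av smul \<sigma> (2 * d + 1 + absa (2 * d + 1) (bgn_orders d l n))
           (Ualpha (2 * d + 1) (bgn_orders d l n) (V1 d U)) Gb"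
      by blast
    have "holder av smul \<sigma> (d + absa d n) (Ualpha d n U) (\<lambda>x. Gb (bgn_lift d l n 1 x))"
      by (rule holder_compose_affine[OF Gb_holder continuous_bgn_lift[OF tf] continuous_bgn_lift[OF tf]
            bgn_lift_diff bgn_lift_scale bgn_lift_in_Km])
        (use bgn_lift_Ualpha[where n=n, OF l] in auto)
    with fdd_extension_via_bgn_lift[OF tf vs l G1(1) Gb] show ?thesis
      by blast
  qed
qed

theorem lemma2p3:
  fixes smul :: "'k::{field,t2_space,perfect_space} \<Rightarrow> 'f::{ab_group_add,t2_space} \<Rightarrow> 'f"
    and d k :: nat
    and U :: "(nat \<Rightarrow> 'k) set"
    and f :: "(nat \<Rightarrow> 'k) \<Rightarrow> 'f"
  assumes "top_field TYPE('k)"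
    and "tvs smul"
    and "d \<ge> 1"
    and "admissible_dom d U"
  shows "(BGN smul k d U f \<longrightarrow> SDS smul k d U f) \<and>
         (\<forall>av \<sigma>. valued_field av \<and> \<sigma> > 0 \<and> BGNH av smul \<sigma> k d U f \<longrightarrow> SDSH av smul \<sigma> k d U f)"
proof -
  have vs: "vector_space smul"
    using assms(2) by (simp add: tvs_def)
  have "SDS smul k d U f" if "BGN smul k d U f"
    using BGN_imp_continuous[OF that] BGN_imp_fdd_extension[OF assms(1) vs that]
    by (auto simp: SDS_def)
  moreover have "SDSH av smul \<sigma> k d U f" if "BGNH av smul \<sigma> k d U f" for av \<sigma>
    using BGNH_imp_holder[OF that] BGNH_imp_fdd_extension[OF assms(1) vs that]
    by (auto simp: SDSH_def)
  ultimately show ?thesis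
    by blast
qed

end
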